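(* For every integer $\ell\ge1$, let $\widetilde{\mathbb{G}}_\ell$ be a truncated $2^\ell$-triangle in $\mathbb{G}$ and $E_0(-\Delta^{\widetilde{\mathbb{G}}_\ell})$ the smallest eigenvalue of the Laplacian with simple boundary condition on $\ell^2(\widetilde{\mathbb{G}}_\ell)$. Then $$\frac{10}{5^{\ell}}\le E_0(-\Delta^{\widetilde{\mathbb{G}}_\ell})\le\frac{40}{5^{\ell}}.$$
   Context: Let $a_1=(0,0)$, $a_2=(1,0)$, $a_3=(1/2,\sqrt3/2)$, $T_0$ the unit equilateral triangle with these vertices, $T_{n+1}=T_n\cup(T_n+2^na_2)\cup(T_n+2^na_3)$. $\mathbb{G}_n$ is the set of vertices of unit triangles in $T_n$, with $x\sim y$ iff $x\ne y$ lie on a common unit triangle; the Sierpinski lattice is $\mathbb{G}=\bigcup_n(\mathbb{G}_n\cup\mathbb{G}_n')$ ($\mathbb{G}_n'$ the mirror image in the $y$-axis), in which every vertex has degree $\deg(x)=4$. A $2^\ell$-triangle is $\mathbb{G}_\ell$ or any translate of it (or of its mirror image) occurring in the natural decomposition of $\mathbb{G}$ into copies of $\mathbb{G}_\ell$; a truncated $2^\ell$-triangle is a $2^\ell$-triangle with its three corner (extreme) vertices removed. For finite $A\subseteq\mathbb{G}$, the simple-boundary Laplacian is $-\Delta^{A}f(x)=\deg(x)f(x)-\sum_{y\in A,y\sim x}f(y)$, $f\in\ell^2(A)$. *)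

theory Defs
  imports "HOL-Analysis.Analysis"
begin

type_synonym pt = "real \<times> real"

definition sa2 :: pt where "sa2 = (1, 0)"
definition sa3 :: pt where "sa3 = (1/2, sqrt 3 / 2)"

text \<open>Lower-left corners of the unit triangles of T_n:
  B_0 = {0}, B_(n+1) = B_n, B_n + 2^n a2, B_n + 2^n a3.\<close>
fun sbase :: "nat \<Rightarrow> pt set" where
  "sbase 0 = {0}"
| "sbase (Suc n) = sbase n \<union> (\<lambda>p. (2::real)^n *\<^sub>R sa2 + p) ` sbase n
                           \<union> (\<lambda>p. (2::real)^n *\<^sub>R sa3 + p) ` sbase n"

definition utri :: "pt \<Rightarrow> pt set" where
  "utri p = {p, p + sa2, p + sa3}"

definition mirror :: "pt \<Rightarrow> pt" where
  "mirror q = (- fst q, snd q)"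

definition Gn :: "nat \<Rightarrow> pt set" where
  "Gn n = (\<Union>p\<in>sbase n. utri p)"

definition unit_tris :: "pt set set" where
  "unit_tris = {utri p | p n. p \<in> sbase n} \<union> {mirror ` utri p | p n. p \<in> sbase n}"

definition SG :: "pt set" where
  "SG = (\<Union>n. Gn n \<union> mirror ` Gn n)"

definition sadj :: "pt \<Rightarrow> pt \<Rightarrow> bool" where
  "sadj x y \<longleftrightarrow> x \<noteq> y \<and> (\<exists>T\<in>unit_tris. x \<in> T \<and> y \<in> T)"

definition sdeg :: "pt \<Rightarrow> nat" where
  "sdeg x = card {y. sadj x y}"

definition corners :: "nat \<Rightarrow> pt set" where
  "corners l = {0, (2::real)^l *\<^sub>R sa2, (2::real)^l *\<^sub>R sa3}"

definition two_pow_triangle :: "nat \<Rightarrow> pt set \<Rightarrow> bool" where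
  "two_pow_triangle l S \<longleftrightarrow> (\<exists>b n. b \<in> sbase n \<and>
      (S = (\<lambda>x. (2::real)^l *\<^sub>R b + x) ` Gn l \<or>
       S = mirror ` (\<lambda>x. (2::real)^l *\<^sub>R b + x) ` Gn l))"

definition truncated_triangle :: "nat \<Rightarrow> pt set \<Rightarrow> bool" where
  "truncated_triangle l S \<longleftrightarrow> (\<exists>b n. b \<in> sbase n \<and>
      (S = (\<lambda>x. (2::real)^l *\<^sub>R b + x) ` (Gn l - corners l) \<or>
       S = mirror ` (\<lambda>x. (2::real)^l *\<^sub>R b + x) ` (Gn l - corners l)))"

definition neg_laplacian :: "pt set \<Rightarrow> (pt \<Rightarrow> real) \<Rightarrow> pt \<Rightarrow> real" where
  "neg_laplacian A f x = real (sdeg x) * f x - (\<Sum>y\<in>{y\<in>A. sadj x y}. f y)"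

definition is_eigenvalue :: "pt set \<Rightarrow> real \<Rightarrow> bool" where
  "is_eigenvalue A ev \<longleftrightarrow> (\<exists>f. (\<exists>x\<in>A. f x \<noteq> 0) \<and>
      (\<forall>x\<in>A. neg_laplacian A f x = ev * f x))"

definition E0 :: "pt set \<Rightarrow> real" where
  "E0 A = Min {ev. is_eigenvalue A ev}"

end

theory Submission
  imports Defs "Jordan_Normal_Form.Char_Poly"
begin

text \<open>
  In integer coordinates \<open>(a, b) \<mapsto> a a\<^sub>2 + b a\<^sub>3\<close> a non-corner point of a \<open>2\<^sup>l\<close>-triangle lies on
  exactly two unit triangles of its block and on no other unit triangle of the lattice. Hence on a
  truncated \<open>2\<^sup>l\<close>-triangle the simple-boundary Laplacian is the Laplacian of \<open>G\<^sub>l\<close> with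
  Dirichlet condition at the three corners, wherever the block sits and however it is oriented.

  Spectral decimation turns an eigenfunction of \<open>G\<^sub>l\<close> with eigenvalue \<open>\<lambda>(5 - \<lambda>)\<close> into one of
  \<open>G\<^sub>l\<^sub>+\<^sub>1\<close> with eigenvalue \<open>\<lambda>\<close>. Starting from the constant function on the three inner points
  of \<open>G\<^sub>1\<close> (eigenvalue 2) and always taking the smaller root \<open>\<lambda>\<close>, all eigenfunctions obtained are
  strictly positive. A positive eigenfunction belongs to the smallest eigenvalue, so \<open>E\<^sub>0\<close> is this
  \<open>\<lambda>\<^sub>l\<close>, and an elementary induction on the recursion gives \<open>10 \<le> 5\<^sup>l \<lambda>\<^sub>l \<le> 40\<close>.
\<close>

section \<open>Integer coordinates\<close>

type_synonym zpt = "int \<times> int"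

definition plane :: "zpt \<Rightarrow> pt" where
  "plane z = of_int (fst z) *\<^sub>R sa2 + of_int (snd z) *\<^sub>R sa3"

definition offsets :: "zpt set" where
  "offsets = {0, (1, 0), (0, 1)}"

definition zscale :: "nat \<Rightarrow> zpt \<Rightarrow> zpt" where
  "zscale l z = (2 ^ l * fst z, 2 ^ l * snd z)"

fun zbase :: "nat \<Rightarrow> zpt set" where
  "zbase 0 = {0}"
| "zbase (Suc n) = (\<Union>e\<in>offsets. (+) (zscale n e) ` zbase n)"

definition ztri :: "zpt \<Rightarrow> zpt set" where
  "ztri p = (+) p ` offsets"

definition zG :: "nat \<Rightarrow> zpt set" where
  "zG l = (\<Union>p\<in>zbase l. ztri p)"

definition zcorners :: "nat \<Rightarrow> zpt set" where
  "zcorners l = zscale l ` offsets"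

definition zinner :: "nat \<Rightarrow> zpt set" where
  "zinner l = zG l - zcorners l"

definition zmirror :: "zpt \<Rightarrow> zpt" where
  "zmirror z = (- fst z - snd z, snd z)"

lemma plane_Pair: "plane (a, b) = (of_int a + of_int b / 2, of_int b * sqrt 3 / 2)"
  by (simp add: plane_def sa2_def sa3_def)

lemma plane_add: "plane (z + w) = plane z + plane w"
  by (simp add: plane_def scaleR_add_left)

lemma plane_zscale: "plane (zscale l z) = 2 ^ l *\<^sub>R plane z"
  by (simp add: plane_def zscale_def scaleR_add_right)

lemma plane_origin: "plane (0, 0) = 0"
  and plane_sa2: "plane (1, 0) = sa2" and plane_sa3: "plane (0, 1) = sa3"
  by (simp_all add: plane_def)

lemma inj_plane: "inj plane"
proof (rule injI)
  fix z w :: zpt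
  assume "plane z = plane w"
  then have "snd z = snd w" and "fst z = fst w"
    by (cases z; cases w; simp add: plane_Pair)+
  then show "z = w" by (simp add: prod_eq_iff)
qed

lemma mirror_plane: "mirror (plane z) = plane (zmirror z)"
  by (cases z) (simp add: mirror_def zmirror_def plane_Pair algebra_simps)

lemma sbase_eq: "sbase n = plane ` zbase n"
proof (induction n)
  case 0
  show ?case by (simp add: plane_def zero_prod_def)
next
  case (Suc n)
  have "plane (zscale n (1, 0)) = 2 ^ n *\<^sub>R sa2" "plane (zscale n (0, 1)) = 2 ^ n *\<^sub>R sa3"
    by (simp_all only: plane_zscale plane_sa2 plane_sa3)
  then show ?case
    by (simp add: Suc offsets_def image_Un image_image plane_add plane_origin zscale_def Un_assoc)
qed

lemma utri_eq: "utri (plane p) = plane ` ztri p"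
  by (simp add: utri_def ztri_def offsets_def plane_add) (simp add: plane_def)

lemma Gn_eq: "Gn l = plane ` zG l"
  by (auto simp: Gn_def zG_def sbase_eq utri_eq)

lemma corners_eq: "corners l = plane ` zcorners l"
  by (simp add: corners_def zcorners_def offsets_def plane_zscale) (simp add: plane_def)

lemma zbase_bounds: "z \<in> zbase l \<Longrightarrow> 0 \<le> fst z \<and> 0 \<le> snd z \<and> fst z + snd z < 2 ^ l"
proof (induction l arbitrary: z)
  case (Suc l)
  then obtain e w where "e \<in> offsets" "w \<in> zbase l" "z = zscale l e + w" by auto
  with Suc.IH[of w] show ?case by (auto simp: offsets_def zscale_def)
qed simp

lemma finite_zbase: "finite (zbase l)"
  by (induction l) (auto simp: offsets_def)

lemma zscale_0 [simp]: "zscale l 0 = 0"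
  by (simp add: zscale_def zero_prod_def)

lemma zbase_mono: "n \<le> m \<Longrightarrow> zbase n \<subseteq> zbase m"
  by (induction m rule: dec_induct) (auto simp: offsets_def)

lemma zscale_add: "zscale l (z + w) = zscale l z + zscale l w"
  by (simp add: zscale_def algebra_simps)

lemma zscale_zscale: "zscale l (zscale n z) = zscale (l + n) z"
  by (simp add: zscale_def power_add)

lemma zbase_add: "zbase (l + n) = (\<Union>c\<in>zbase n. (+) (zscale l c) ` zbase l)"
proof (induction n)
  case 0
  show ?case by simp
next
  case (Suc n)
  have "zbase (l + Suc n) = (\<Union>e\<in>offsets. \<Union>c\<in>zbase n. (+) (zscale l (zscale n e + c)) ` zbase l)"
    by (simp add: Suc image_UN image_image zscale_add zscale_zscale add.assoc)
  also have "\<dots> = (\<Union>c\<in>zbase (Suc n). (+) (zscale l c) ` zbase l)"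
    by auto
  finally show ?case .
qed

lemma zbase_Suc_iff:
  "z \<in> zbase (Suc n) \<longleftrightarrow> (fst z mod 2, snd z mod 2) \<in> offsets \<and> (fst z div 2, snd z div 2) \<in> zbase n"
proof -
  have "zbase (Suc n) = (\<Union>c\<in>zbase n. (+) (zscale 1 c) ` offsets)"
    using zbase_add[of 1 n] by (simp add: zscale_def image_UN)
  then have "z \<in> zbase (Suc n) \<longleftrightarrow> (\<exists>c\<in>zbase n. \<exists>e\<in>offsets. z = zscale 1 c + e)"
    by auto
  also have "\<dots> \<longleftrightarrow> (fst z mod 2, snd z mod 2) \<in> offsets \<and> (fst z div 2, snd z div 2) \<in> zbase n"
  proof
    assume "\<exists>c\<in>zbase n. \<exists>e\<in>offsets. z = zscale 1 c + e"
    then show "(fst z mod 2, snd z mod 2) \<in> offsets \<and> (fst z div 2, snd z div 2) \<in> zbase n"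
      by (auto simp: offsets_def zscale_def zero_prod_def)
  next
    assume "(fst z mod 2, snd z mod 2) \<in> offsets \<and> (fst z div 2, snd z div 2) \<in> zbase n"
    moreover have "z = zscale 1 (fst z div 2, snd z div 2) + (fst z mod 2, snd z mod 2)"
      by (simp add: zscale_def prod_eq_iff)
    ultimately show "\<exists>c\<in>zbase n. \<exists>e\<in>offsets. z = zscale 1 c + e" by blast
  qed
  finally show ?thesis .
qed

lemma int_div_mod_2:
  fixes a :: int
  shows "(2 * a + 1) mod 2 = 1" "(2 * a + 1) div 2 = a"
    and "(2 * a - 1) mod 2 = 1" "(2 * a - 1) div 2 = a - 1"
    and "(2 + 2 * a) div 2 = a + 1"
  by presburger+

declare zbase.simps(2) [simp del]

section \<open>Interior points of the finite gaskets\<close>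

definition tri_offsets :: "nat \<Rightarrow> zpt \<Rightarrow> zpt set" where
  "tri_offsets l z = {e \<in> offsets. z - e \<in> zbase l}"

lemma ztri_Pair: "ztri (a, b) = {(a, b), (a + 1, b), (a, b + 1)}"
  by (simp add: ztri_def offsets_def zero_prod_def)

lemma mem_ztri: "z \<in> ztri p \<longleftrightarrow> z - p \<in> offsets"
  by (force simp: ztri_def)

lemma zG_iff_tri_offsets: "z \<in> zG l \<longleftrightarrow> tri_offsets l z \<noteq> {}"
proof -
  have "z \<in> zG l \<longleftrightarrow> (\<exists>p\<in>zbase l. z - p \<in> offsets)"
    by (simp add: zG_def mem_ztri)
  also have "\<dots> \<longleftrightarrow> (\<exists>e\<in>offsets. z - e \<in> zbase l)"
    by (metis add_diff_cancel_left' diff_add_cancel)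
  finally show ?thesis by (auto simp: tri_offsets_def)
qed

lemma zG_bounds: "z \<in> zG l \<Longrightarrow> 0 \<le> fst z \<and> 0 \<le> snd z \<and> fst z + snd z \<le> 2 ^ l"
  by (cases z) (auto simp: zG_def mem_ztri offsets_def zero_prod_def dest!: zbase_bounds)

lemma finite_zG: "finite (zG l)"
  by (simp add: zG_def ztri_def finite_zbase offsets_def)

lemma finite_zinner: "finite (zinner l)"
  by (simp add: zinner_def finite_zG)

lemma tri_offsets_even: "tri_offsets (Suc l) (2 * a, 2 * b) = tri_offsets l (a, b)"
  by (auto simp: tri_offsets_def offsets_def zbase_Suc_iff int_div_mod_2 zero_prod_def)

lemma tri_offsets_odd_even:
  "tri_offsets (Suc l) (2 * a + 1, 2 * b) = (if (a, b) \<in> zbase l then {0, (1, 0)} else {})"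
  by (auto simp: tri_offsets_def offsets_def zbase_Suc_iff int_div_mod_2 zero_prod_def)

lemma tri_offsets_even_odd:
  "tri_offsets (Suc l) (2 * a, 2 * b + 1) = (if (a, b) \<in> zbase l then {0, (0, 1)} else {})"
  by (auto simp: tri_offsets_def offsets_def zbase_Suc_iff int_div_mod_2 zero_prod_def)

lemma tri_offsets_odd_odd:
  "tri_offsets (Suc l) (2 * a + 1, 2 * b + 1) = (if (a, b) \<in> zbase l then {(1, 0), (0, 1)} else {})"
  by (auto simp: tri_offsets_def offsets_def zbase_Suc_iff int_div_mod_2 zero_prod_def)

lemma zcorners_eq: "zcorners l = {(0, 0), (2 ^ l, 0), (0, 2 ^ l)}"
  by (simp add: zcorners_def offsets_def zscale_def zero_prod_def)

lemma zcorners_Suc_even: "(2 * a, 2 * b) \<in> zcorners (Suc l) \<longleftrightarrow> (a, b) \<in> zcorners l"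
  by (auto simp: zcorners_def zscale_def offsets_def zero_prod_def)

lemma zcorners_Suc_odd: "odd a \<or> odd b \<Longrightarrow> (a, b) \<notin> zcorners (Suc l)"
  by (auto simp: zcorners_def zscale_def offsets_def zero_prod_def)

lemma zpt_parity_cases:
  fixes z :: zpt
  obtains (even_even) a b where "z = (2 * a, 2 * b)"
  | (odd_even) a b where "z = (2 * a + 1, 2 * b)"
  | (even_odd) a b where "z = (2 * a, 2 * b + 1)"
  | (odd_odd) a b where "z = (2 * a + 1, 2 * b + 1)"
  by (cases z) (metis evenE oddE)

lemma zinner_Suc_even: "(2 * a, 2 * b) \<in> zinner (Suc l) \<longleftrightarrow> (a, b) \<in> zinner l"
  by (simp add: zinner_def zG_iff_tri_offsets tri_offsets_even zcorners_Suc_even)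

lemma zinner_Suc_odd:
  "(2 * a + 1, 2 * b) \<in> zinner (Suc l) \<longleftrightarrow> (a, b) \<in> zbase l"
  "(2 * a, 2 * b + 1) \<in> zinner (Suc l) \<longleftrightarrow> (a, b) \<in> zbase l"
  "(2 * a + 1, 2 * b + 1) \<in> zinner (Suc l) \<longleftrightarrow> (a, b) \<in> zbase l"
  by (simp_all add: zinner_def zG_iff_tri_offsets zcorners_Suc_odd
      tri_offsets_odd_even tri_offsets_even_odd tri_offsets_odd_odd)

lemma tri_offsets_zinner:
  "z \<in> zinner l \<Longrightarrow> tri_offsets l z \<in> {{0, (1, 0)}, {0, (0, 1)}, {(1, 0), (0, 1)}}"
proof (induction l arbitrary: z)
  case 0
  have "zG 0 = zcorners 0" by (auto simp: zG_def zcorners_def mem_ztri zscale_def)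
  with 0 show ?case by (simp add: zinner_def)
next
  case (Suc l)
  then have "tri_offsets (Suc l) z \<noteq> {}" by (simp add: zinner_def zG_iff_tri_offsets)
  with Suc show ?case
    by (cases z rule: zpt_parity_cases)
      (simp_all add: zinner_Suc_even tri_offsets_even tri_offsets_odd_even tri_offsets_even_odd
        tri_offsets_odd_odd split: if_splits)
qed

text \<open>The constant 4 in \<open>zlap\<close> is the degree of every non-corner point.\<close>

definition znbrs :: "nat \<Rightarrow> zpt \<Rightarrow> zpt set" where
  "znbrs l z = (\<Union>e\<in>tri_offsets l z. ztri (z - e)) - {z}"

definition zlap :: "nat \<Rightarrow> (zpt \<Rightarrow> real) \<Rightarrow> zpt \<Rightarrow> real" where
  "zlap l g z = 4 * g z - (\<Sum>w\<in>znbrs l z. g w)"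

lemma znbrs_subset_zG: "znbrs l z \<subseteq> zG l"
  by (auto simp: znbrs_def tri_offsets_def zG_def)

lemma finite_znbrs: "finite (znbrs l z)"
  using finite_subset[OF znbrs_subset_zG finite_zG] .

lemma znbrs_expl:
  shows "tri_offsets l (a, b) = {0, (1, 0)} \<Longrightarrow>
      znbrs l (a, b) = {(a - 1, b), (a - 1, b + 1), (a + 1, b), (a, b + 1)}"
    and "tri_offsets l (a, b) = {0, (0, 1)} \<Longrightarrow>
      znbrs l (a, b) = {(a, b - 1), (a + 1, b - 1), (a + 1, b), (a, b + 1)}"
    and "tri_offsets l (a, b) = {(1, 0), (0, 1)} \<Longrightarrow>
      znbrs l (a, b) = {(a, b - 1), (a + 1, b - 1), (a - 1, b), (a - 1, b + 1)}"
  by (simp_all add: znbrs_def ztri_Pair insert_Diff_if)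

lemma zlap_expl:
  shows "tri_offsets l (a, b) = {0, (1, 0)} \<Longrightarrow>
      zlap l g (a, b) = 4 * g (a, b) - (g (a + 1, b) + g (a, b + 1) + g (a - 1, b) + g (a - 1, b + 1))"
    and "tri_offsets l (a, b) = {0, (0, 1)} \<Longrightarrow>
      zlap l g (a, b) = 4 * g (a, b) - (g (a + 1, b) + g (a, b + 1) + g (a, b - 1) + g (a + 1, b - 1))"
    and "tri_offsets l (a, b) = {(1, 0), (0, 1)} \<Longrightarrow>
      zlap l g (a, b) = 4 * g (a, b) - (g (a - 1, b) + g (a - 1, b + 1) + g (a, b - 1) + g (a + 1, b - 1))"
  by (simp_all add: zlap_def znbrs_expl algebra_simps)

lemma card_znbrs: "z \<in> zinner l \<Longrightarrow> card (znbrs l z) = 4"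
  using tri_offsets_zinner[of z l] by (cases z) (auto simp: znbrs_expl)

section \<open>Spectral decimation\<close>

lemma zlap_cong: "z \<in> zG l \<Longrightarrow> (\<And>w. w \<in> zG l \<Longrightarrow> f w = h w) \<Longrightarrow> zlap l f z = zlap l h z"
  unfolding zlap_def using znbrs_subset_zG[of l z] by (auto intro!: sum.cong)

definition zrestrict :: "nat \<Rightarrow> (zpt \<Rightarrow> real) \<Rightarrow> zpt \<Rightarrow> real" where
  "zrestrict l f w = (if w \<in> zinner l then f w else 0)"

text \<open>
  \<open>decimate \<lambda> g\<close> keeps the values of \<open>g\<close> at the coarse vertices \<open>2y\<close>; at the midpoint of a coarse
  edge \<open>ab\<close> of a coarse triangle \<open>abc\<close> it takes \<open>edge_value \<lambda> (g a) (g b) (g c)\<close>, the value forced by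
  the eigenvalue equation (eigenvalue \<open>\<lambda>\<close>) at the three midpoints of that triangle.
\<close>

definition edge_value :: "real \<Rightarrow> real \<Rightarrow> real \<Rightarrow> real \<Rightarrow> real" where
  "edge_value lam a b c = ((4 - lam) * (a + b) + 2 * c) / ((2 - lam) * (5 - lam))"

definition decimate :: "real \<Rightarrow> (zpt \<Rightarrow> real) \<Rightarrow> zpt \<Rightarrow> real" where
  "decimate lam g w =
    (let a = fst w div 2; b = snd w div 2; A = g (a, b); B = g (a + 1, b); C = g (a, b + 1) in
     if even (fst w) \<and> even (snd w) then A
     else if even (snd w) then edge_value lam A B C
     else if even (fst w) then edge_value lam A C B
     else edge_value lam B C A)"

lemma edge_value_commute: "edge_value lam a b c = edge_value lam b a c"
  by (simp add: edge_value_def add.commute)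

lemma decimate_even: "decimate lam g (2 * a, 2 * b) = g (a, b)"
  by (simp add: decimate_def)

lemma decimate_odd:
  "decimate lam g (2 * a + 1, 2 * b) = edge_value lam (g (a, b)) (g (a + 1, b)) (g (a, b + 1))"
  "decimate lam g (2 * a, 2 * b + 1) = edge_value lam (g (a, b)) (g (a, b + 1)) (g (a + 1, b))"
  "decimate lam g (2 * a + 1, 2 * b + 1) = edge_value lam (g (a + 1, b)) (g (a, b + 1)) (g (a, b))"
  by (simp_all add: decimate_def int_div_mod_2)

lemma decimate_shifted:
  "decimate lam g (2 * a - 1, 2 * b) = edge_value lam (g (a - 1, b)) (g (a, b)) (g (a - 1, b + 1))"
  "decimate lam g (2 * a - 1, 2 * b + 1) = edge_value lam (g (a, b)) (g (a - 1, b + 1)) (g (a - 1, b))"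
  "decimate lam g (2 * a, 2 * b - 1) = edge_value lam (g (a, b - 1)) (g (a, b)) (g (a + 1, b - 1))"
  "decimate lam g (2 * a + 1, 2 * b - 1) = edge_value lam (g (a + 1, b - 1)) (g (a, b)) (g (a, b - 1))"
  "decimate lam g (2 + 2 * a, 2 * b) = g (a + 1, b)"
  "decimate lam g (2 * a, 2 + 2 * b) = g (a, b + 1)"
  by (simp_all add: decimate_def int_div_mod_2 Let_def)

lemma decimate_nbr_sum_even:
  assumes "(a, b) \<in> zinner l"
  shows "(\<Sum>w\<in>znbrs (Suc l) (2 * a, 2 * b). decimate lam g w)
    = ((4 - lam) * (4 * g (a, b) + (\<Sum>w\<in>znbrs l (a, b). g w)) + 2 * (\<Sum>w\<in>znbrs l (a, b). g w))
      / ((2 - lam) * (5 - lam))"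
proof -
  have "tri_offsets (Suc l) (2 * a, 2 * b) = tri_offsets l (a, b)"
    by (rule tri_offsets_even)
  with tri_offsets_zinner[OF assms] show ?thesis
    by (elim insertE emptyE;
        simp add: znbrs_expl decimate_shifted decimate_odd edge_value_def;
        simp add: divide_inverse algebra_simps)
qed

lemma decimate_eigen_even:
  assumes y: "(a, b) \<in> zinner l" and D: "(2 - lam) * (5 - lam) \<noteq> 0"
    and eig: "zlap l g (a, b) = lam * (5 - lam) * g (a, b)"
  shows "zlap (Suc l) (decimate lam g) (2 * a, 2 * b) = lam * g (a, b)"
proof -
  define S where "S = (\<Sum>w\<in>znbrs l (a, b). g w)"
  have S: "S = (4 - lam * (5 - lam)) * g (a, b)"
    using eig by (simp add: zlap_def S_def algebra_simps)
  have "zlap (Suc l) (decimate lam g) (2 * a, 2 * b)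
      = 4 * g (a, b) - ((4 - lam) * (4 * g (a, b) + S) + 2 * S) / ((2 - lam) * (5 - lam))"
    by (simp add: zlap_def decimate_even decimate_nbr_sum_even[OF y] S_def)
  also have "\<dots> = lam * g (a, b)"
    using D by (simp add: S field_simps)
  finally show ?thesis .
qed

lemma edge_value_eigen:
  assumes "(2 - lam) * (5 - lam) \<noteq> 0"
  shows "4 * edge_value lam a b c - (a + b + edge_value lam a c b + edge_value lam b c a)
    = lam * edge_value lam a b c"
proof -
  define d where "d = (2 - lam) * (5 - lam)"
  define N where "N x y z = (4 - lam) * (x + y) + 2 * z" for x y z
  have d0: "d \<noteq> 0" using assms by (simp add: d_def)
  have "(4 - lam) * N a b c - d * (a + b) - N a c b - N b c a = 0"
    by (simp add: d_def N_def algebra_simps)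
  moreover have "4 * (N a b c / d) - (a + b + N a c b / d + N b c a / d) - lam * (N a b c / d)
      = ((4 - lam) * N a b c - d * (a + b) - N a c b - N b c a) / d"
    using d0 by (simp add: field_simps)
  ultimately show ?thesis
    by (simp add: edge_value_def flip: d_def N_def)
qed

lemma decimate_eigen_odd:
  assumes "(a, b) \<in> zbase l" and D: "(2 - lam) * (5 - lam) \<noteq> 0"
  shows "zlap (Suc l) (decimate lam g) (2 * a + 1, 2 * b) = lam * decimate lam g (2 * a + 1, 2 * b)"
    and "zlap (Suc l) (decimate lam g) (2 * a, 2 * b + 1) = lam * decimate lam g (2 * a, 2 * b + 1)"
    and "zlap (Suc l) (decimate lam g) (2 * a + 1, 2 * b + 1) = lam * decimate lam g (2 * a + 1, 2 * b + 1)"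
  using assms(1) edge_value_eigen[OF D, of "g (a, b)" "g (a + 1, b)" "g (a, b + 1)"]
    edge_value_eigen[OF D, of "g (a, b)" "g (a, b + 1)" "g (a + 1, b)"]
    edge_value_eigen[OF D, of "g (a + 1, b)" "g (a, b + 1)" "g (a, b)"]
  by (simp_all add: tri_offsets_odd_even tri_offsets_even_odd tri_offsets_odd_odd zlap_expl
      decimate_even decimate_odd decimate_shifted)
    (simp_all add: edge_value_commute algebra_simps)

lemma decimate_zcorners:
  assumes "\<And>c. c \<in> zcorners l \<Longrightarrow> g c = 0" and "w \<in> zcorners (Suc l)"
  shows "decimate lam g w = 0"
proof -
  from assms(2) obtain e where e: "e \<in> offsets" "w = zscale (1 + l) e"
    by (auto simp: zcorners_def)
  define c where "c = zscale l e"
  have c: "c \<in> zcorners l" "w = zscale 1 c"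
    using e by (simp_all add: c_def zcorners_def zscale_zscale)
  then show ?thesis
    using assms(1) decimate_even[of lam g "fst c" "snd c"] by (simp add: zscale_def)
qed

lemma decimation:
  assumes g0: "\<And>w. w \<notin> zinner l \<Longrightarrow> g w = 0"
    and eig: "\<And>y. y \<in> zinner l \<Longrightarrow> zlap l g y = lam * (5 - lam) * g y"
    and D: "(2 - lam) * (5 - lam) \<noteq> 0" and z: "z \<in> zinner (Suc l)"
  shows "zlap (Suc l) (zrestrict (Suc l) (decimate lam g)) z = lam * decimate lam g z"
proof -
  have "zlap (Suc l) (zrestrict (Suc l) (decimate lam g)) z = zlap (Suc l) (decimate lam g) z"
  proof (rule zlap_cong)
    show "z \<in> zG (Suc l)" using z by (simp add: zinner_def)
    have "g c = 0" if "c \<in> zcorners l" for c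
      using g0 that by (simp add: zinner_def)
    then show "zrestrict (Suc l) (decimate lam g) w = decimate lam g w" if "w \<in> zG (Suc l)" for w
      using that decimate_zcorners[of l g w lam] by (auto simp: zrestrict_def zinner_def)
  qed
  also have "\<dots> = lam * decimate lam g z"
    using z
    by (cases z rule: zpt_parity_cases)
      (simp_all add: zinner_Suc_even zinner_Suc_odd decimate_even decimate_eigen_even[OF _ D eig]
        decimate_eigen_odd[OF _ D])
  finally show ?thesis .
qed

section \<open>The positive ground state\<close>

definition dec_root :: "real \<Rightarrow> real" where
  "dec_root x = (5 - sqrt (25 - 4 * x)) / 2"

lemma dec_root:
  assumes "0 < x" "x \<le> 2"
  shows "0 < dec_root x" "dec_root x \<le> x / 4" "dec_root x * (5 - dec_root x) = x"
proof -
  define s where "s = sqrt (25 - 4 * x)"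
  have s2: "s\<^sup>2 = 25 - 4 * x" using assms by (simp add: s_def)
  have "s < 5" unfolding s_def using assms by (intro real_less_lsqrt) auto
  moreover have "4 \<le> s" using assms by (simp add: s_def real_le_rsqrt)
  moreover have s_eq: "s = 5 - 2 * dec_root x" by (simp add: dec_root_def s_def field_simps)
  ultimately have pos: "0 < dec_root x" and "dec_root x \<le> 1 / 2" by simp_all
  show "0 < dec_root x" by (fact pos)
  show eq: "dec_root x * (5 - dec_root x) = x"
    using s2 unfolding s_eq by (simp add: power2_eq_square algebra_simps)
  have "dec_root x * dec_root x \<le> dec_root x * (1 / 2)"
    using pos \<open>dec_root x \<le> 1 / 2\<close> by (intro mult_left_mono) auto
  moreover have "5 * dec_root x = x + dec_root x * dec_root x"
    using eq by (simp add: algebra_simps)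
  ultimately show "dec_root x \<le> x / 4" using pos by linarith
qed

text \<open>
  The slack \<open>125/(4t)\<close> in the upper bound shrinks by exactly \<open>25/t\<close> when \<open>t\<close> becomes \<open>5t\<close>, which
  absorbs the quadratic term in \<open>5ty = tx + ty\<^sup>2\<close>.
\<close>

lemma dec_root_scaled_bounds:
  assumes x: "0 < x" "x \<le> 2" and t: "0 < t"
    and lo: "10 \<le> t * x" and hi: "t * x \<le> 65 / 4 - 125 / (4 * t)"
  shows "10 \<le> (5 * t) * dec_root x" and "(5 * t) * dec_root x \<le> 65 / 4 - 125 / (4 * (5 * t))"
proof -
  define y where "y = dec_root x"
  have y: "0 < y" "y \<le> x / 4" "5 * y = x + y\<^sup>2"
    using dec_root[OF x] by (simp_all add: y_def power2_eq_square algebra_simps)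
  then have step: "(5 * t) * y = t * x + t * y\<^sup>2" by (simp add: algebra_simps)
  moreover have "0 \<le> t * y\<^sup>2" using t by simp
  ultimately show "10 \<le> (5 * t) * dec_root x"
    using lo unfolding y_def by linarith
  have "t * y \<le> t * x / 4" using y t by simp
  also have "\<dots> \<le> 5"
    using hi divide_pos_pos[of 125 "4 * t"] t by linarith
  finally have "(t * y)\<^sup>2 \<le> 5\<^sup>2" using y t by (intro power_mono) auto
  then have "t * y\<^sup>2 \<le> 25 / t" using t by (simp add: field_simps power2_eq_square)
  moreover have "125 / (4 * (5 * t)) = 125 / (4 * t) - 25 / t" using t by (simp add: field_simps)
  ultimately show "(5 * t) * dec_root x \<le> 65 / 4 - 125 / (4 * (5 * t))"
    using step hi by (simp add: y_def)
qed

text \<open>\<open>ground_ev k\<close> and \<open>ground_state k\<close> belong to level \<open>Suc k\<close>, i.e.\ to the truncated \<open>G\<^sub>k\<^sub>+\<^sub>1\<close>.\<close>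

fun ground_ev :: "nat \<Rightarrow> real" where
  "ground_ev 0 = 2"
| "ground_ev (Suc k) = dec_root (ground_ev k)"

lemma ground_ev_invariant:
  "0 < ground_ev k \<and> ground_ev k \<le> 2 \<and> 10 \<le> 5 ^ Suc k * ground_ev k
    \<and> 5 ^ Suc k * ground_ev k \<le> 65 / 4 - 125 / (4 * 5 ^ Suc k)"
proof (induction k)
  case (Suc k)
  then have x: "0 < ground_ev k" "ground_ev k \<le> 2" by auto
  show ?case
    using dec_root[OF x] dec_root_scaled_bounds[OF x, of "5 ^ Suc k"] Suc by auto
qed simp

lemma ground_ev_bounds: "10 / 5 ^ Suc k \<le> ground_ev k \<and> ground_ev k \<le> 40 / 5 ^ Suc k"
proof -
  have lo: "10 \<le> 5 ^ Suc k * ground_ev k"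
    and hi: "5 ^ Suc k * ground_ev k \<le> 65 / 4 - 125 / (4 * 5 ^ Suc k)"
    using ground_ev_invariant[of k] by auto
  have "0 < 125 / (4 * 5 ^ Suc k :: real)" by simp
  with hi have "5 ^ Suc k * ground_ev k \<le> 40" by linarith
  with lo show ?thesis by (simp add: field_simps)
qed

fun ground_state :: "nat \<Rightarrow> zpt \<Rightarrow> real" where
  "ground_state 0 = zrestrict 1 (\<lambda>_. 1)"
| "ground_state (Suc k) = zrestrict (Suc (Suc k)) (decimate (ground_ev (Suc k)) (ground_state k))"

lemma ground_state_outside: "w \<notin> zinner (Suc k) \<Longrightarrow> ground_state k w = 0"
  by (cases k) (simp_all add: zrestrict_def)

lemma zbase_1: "zbase (Suc 0) = offsets"
  by (simp add: zbase.simps(2) zscale_def)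

lemma edge_value_pos:
  assumes "0 \<le> a" "0 \<le> b" "0 \<le> c" "0 < a \<or> 0 < b \<or> 0 < c" "lam < 2"
  shows "0 < edge_value lam a b c"
proof -
  have "0 \<le> (4 - lam) * a" "0 \<le> (4 - lam) * b"
    and "0 < a \<Longrightarrow> 0 < (4 - lam) * a" "0 < b \<Longrightarrow> 0 < (4 - lam) * b"
    using assms by simp_all
  then have "0 < (4 - lam) * a + (4 - lam) * b + 2 * c"
    using assms by linarith
  moreover have "0 < (2 - lam) * (5 - lam)" using assms by simp
  ultimately show ?thesis by (simp add: edge_value_def distrib_left)
qed

lemma zinner_1: "zinner (Suc 0) = {(1, 0), (0, 1), (1, 1)}"
proof -
  have "zG (Suc 0) = {(0, 0), (1, 0), (0, 1), (2, 0), (1, 1), (0, 2)}"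
    by (auto simp: zG_def zbase_1 offsets_def zero_prod_def ztri_Pair)
  moreover have "zcorners (Suc 0) = {(0, 0), (2, 0), (0, 2)}"
    by (simp add: zcorners_def offsets_def zscale_def zero_prod_def)
  ultimately show ?thesis by (auto simp: zinner_def)
qed

lemma ground_state_0_eigen:
  assumes "z \<in> zinner (Suc 0)"
  shows "zlap (Suc 0) (ground_state 0) z = 2 * ground_state 0 z"
proof -
  have "tri_offsets (Suc 0) (1, 0) = {0, (1, 0)}" "tri_offsets (Suc 0) (0, 1) = {0, (0, 1)}"
    "tri_offsets (Suc 0) (1, 1) = {(1, 0), (0, 1)}"
    using tri_offsets_odd_even[of 0 0 0] tri_offsets_even_odd[of 0 0 0] tri_offsets_odd_odd[of 0 0 0]
    by (simp_all add: zero_prod_def)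
  from zlap_expl(1)[OF this(1)] zlap_expl(2)[OF this(2)] zlap_expl(3)[OF this(3)]
  show ?thesis
    using assms unfolding zinner_1 by (auto simp: zrestrict_def zinner_1)
qed

lemma ztri_meets_zinner:
  assumes "q \<in> zbase (Suc l)"
  shows "q \<in> zinner (Suc l) \<or> q + (1, 0) \<in> zinner (Suc l) \<or> q + (0, 1) \<in> zinner (Suc l)"
proof -
  have "ztri q \<subseteq> zG (Suc l)" using assms by (auto simp: zG_def)
  moreover have "\<not> (q \<in> zcorners (Suc l) \<and> q + (1, 0) \<in> zcorners (Suc l))"
    unfolding zcorners_eq by (cases q) (auto; presburger)
  ultimately show ?thesis by (cases q) (auto simp: zinner_def ztri_Pair)
qed

lemma decimate_pos:
  assumes "w \<in> zinner (Suc (Suc k))" and lam: "lam < 2"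
    and g0: "\<And>w. w \<notin> zinner (Suc k) \<Longrightarrow> g w = 0"
    and gpos: "\<And>w. w \<in> zinner (Suc k) \<Longrightarrow> 0 < g w"
  shows "0 < decimate lam g w"
proof -
  have gnn: "0 \<le> g w" for w
    using g0[of w] gpos[of w] by fastforce
  have one_pos: "0 < g (a, b) \<or> 0 < g (a + 1, b) \<or> 0 < g (a, b + 1)" if "(a, b) \<in> zbase (Suc k)" for a b
    using ztri_meets_zinner[OF that] gpos by auto
  show ?thesis
    using assms(1)
  proof (cases w rule: zpt_parity_cases)
    case (even_even a b)
    then show ?thesis using assms(1) gpos by (simp add: zinner_Suc_even decimate_even)
  next
    case (odd_even a b)
    then show ?thesis using assms(1) one_pos
      by (auto simp: zinner_Suc_odd decimate_odd intro!: edge_value_pos gnn lam)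
  next
    case (even_odd a b)
    then show ?thesis using assms(1) one_pos
      by (auto simp: zinner_Suc_odd decimate_odd intro!: edge_value_pos gnn lam)
  next
    case (odd_odd a b)
    then show ?thesis using assms(1) one_pos
      by (auto simp: zinner_Suc_odd decimate_odd intro!: edge_value_pos gnn lam)
  qed
qed

lemma ground_state:
  "(\<forall>w\<in>zinner (Suc k). 0 < ground_state k w)
    \<and> (\<forall>z\<in>zinner (Suc k). zlap (Suc k) (ground_state k) z = ground_ev k * ground_state k z)"
proof (induction k)
  case 0
  have "0 < ground_state 0 w" if "w \<in> zinner (Suc 0)" for w
    using that by (simp add: zrestrict_def)
  with ground_state_0_eigen show ?case by simp
next
  case (Suc k)
  define lam where "lam = ground_ev (Suc k)"
  define g where "g = ground_state k"
  have x: "0 < ground_ev k" "ground_ev k \<le> 2"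
    using ground_ev_invariant[of k] by auto
  have lam: "lam < 2" "lam * (5 - lam) = ground_ev k"
    using dec_root[OF x] x by (simp_all add: lam_def)
  have g0: "g w = 0" if "w \<notin> zinner (Suc k)" for w
    using that by (simp add: g_def ground_state_outside)
  have gpos: "0 < g w" if "w \<in> zinner (Suc k)" for w
    using Suc that by (simp add: g_def)
  have eig: "zlap (Suc k) g y = lam * (5 - lam) * g y" if "y \<in> zinner (Suc k)" for y
    using Suc that by (simp add: g_def lam)
  have D: "(2 - lam) * (5 - lam) \<noteq> 0"
    using lam by simp
  have gs: "ground_state (Suc k) = zrestrict (Suc (Suc k)) (decimate lam g)"
    by (simp add: g_def lam_def)
  have "0 < ground_state (Suc k) w" if "w \<in> zinner (Suc (Suc k))" for w
    unfolding gs using decimate_pos[of w k lam g, OF that lam(1) g0 gpos] that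
    by (simp add: zrestrict_def)
  moreover have "zlap (Suc (Suc k)) (ground_state (Suc k)) z = lam * ground_state (Suc k) z"
    if "z \<in> zinner (Suc (Suc k))" for z
    unfolding gs using decimation[OF g0 eig D that] that by (simp add: zrestrict_def)
  ultimately show ?case by (simp add: lam_def)
qed

section \<open>Truncated blocks inside the lattice\<close>

text \<open>
  A non-corner point of a block is not congruent modulo \<open>2\<^sup>l\<close> to any other point of a block; this is
  why it only lies on unit triangles of its own block.
\<close>

lemma zinner_zscale_diff:
  assumes z: "z \<in> zinner l" and u: "u \<in> zG l" and d: "z - u = zscale l d"
  shows "d = 0"
proof -
  define N :: int where "N = 2 ^ l"
  have N: "0 < N" by (simp add: N_def)
  have zb: "0 \<le> fst z" "0 \<le> snd z" "fst z + snd z \<le> N"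
    and ub: "0 \<le> fst u" "0 \<le> snd u" "fst u + snd u \<le> N"
    using zG_bounds[of z l] zG_bounds[OF u] z by (auto simp: zinner_def N_def)
  have nc: "z \<noteq> (0, 0)" "z \<noteq> (N, 0)" "z \<noteq> (0, N)"
    using z by (auto simp: zinner_def zcorners_eq N_def)
  have e: "fst z - fst u = N * fst d" "snd z - snd u = N * snd d"
    using arg_cong[OF d, of fst] arg_cong[OF d, of snd] by (simp_all add: zscale_def N_def)
  have big: "N \<le> N * x" if "1 \<le> x" for x
    using mult_left_mono[OF that, of N] N by simp
  have small: "N * x \<le> - N" if "x \<le> -1" for x
    using mult_left_mono[OF that, of N] N by simp
  consider "1 \<le> fst d" | "fst d \<le> -1" | "fst d = 0" by linarith
  then have "fst d = 0 \<and> snd d = 0"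
  proof cases
    case 1
    then have "z = (N, 0)" using big[OF 1] e zb ub by (simp add: prod_eq_iff)
    with nc show ?thesis by simp
  next
    case 2
    then have z1: "fst z = 0" "snd u = 0" using small[OF 2] e zb ub by linarith+
    consider "1 \<le> snd d" | "snd d \<le> -1" | "snd d = 0" by linarith
    then show ?thesis
    proof cases
      case 1
      then have "z = (0, N)" using big[OF 1] e zb z1 by (simp add: prod_eq_iff)
      with nc show ?thesis by simp
    next
      case 2
      then show ?thesis using small[OF 2] e zb z1 N by linarith
    next
      case 3
      then have "z = (0, 0)" using e z1 by (simp add: prod_eq_iff)
      with nc show ?thesis by simp
    qed
  next
    case 3
    consider "1 \<le> snd d" | "snd d \<le> -1" | "snd d = 0" by linarith
    then show ?thesis
    proof cases
      case 1
      then have "z = (0, N)" using big[OF 1] e zb ub by (simp add: prod_eq_iff)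
      with nc show ?thesis by simp
    next
      case 2
      then have "z = (0, 0)" using small[OF 2] e zb ub \<open>fst d = 0\<close> by (simp add: prod_eq_iff)
      with nc show ?thesis by simp
    qed (use \<open>fst d = 0\<close> in simp)
  qed
  then show ?thesis by (simp add: prod_eq_iff)
qed

definition block_pt :: "nat \<Rightarrow> zpt \<Rightarrow> zpt \<Rightarrow> pt" where
  "block_pt l b w = plane (zscale l b + w)"

lemma inj_block_pt: "inj (block_pt l b)"
  by (rule injI) (simp add: block_pt_def inj_eq[OF inj_plane])

lemma ztri_shift: "ztri (p + q) = (+) p ` ztri q"
  by (simp add: ztri_def image_image add.assoc)

lemma zscale_diff: "zscale l c - zscale l b = zscale l (c - b)"
  by (simp add: zscale_def algebra_simps)

lemma unit_tri_of_block:
  assumes "b \<in> zbase n" "e \<in> tri_offsets l z"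
  shows "block_pt l b ` ztri (z - e) \<in> unit_tris" and "block_pt l b z \<in> block_pt l b ` ztri (z - e)"
proof -
  have "zscale l b + (z - e) \<in> zbase (l + n)"
    using assms by (auto simp: zbase_add tri_offsets_def)
  then have "utri (plane (zscale l b + (z - e))) \<in> {utri p | p n. p \<in> sbase n}"
    unfolding sbase_eq by blast
  then have "utri (plane (zscale l b + (z - e))) \<in> unit_tris"
    by (simp add: unit_tris_def)
  then show "block_pt l b ` ztri (z - e) \<in> unit_tris"
    by (simp add: utri_eq ztri_shift image_image block_pt_def)
  show "block_pt l b z \<in> block_pt l b ` ztri (z - e)"
    using assms(2) by (auto simp: tri_offsets_def mem_ztri)
qed

lemma unit_tri_through_block:
  assumes b: "b \<in> zbase n" and z: "z \<in> zinner l" and T: "T \<in> unit_tris" and x: "block_pt l b z \<in> T"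
  shows "\<exists>e\<in>tri_offsets l z. T = block_pt l b ` ztri (z - e)"
proof -
  from T consider (upright) p m where "p \<in> zbase m" "T = plane ` ztri p"
    | (mirrored) p m where "p \<in> zbase m" "T = mirror ` plane ` ztri p"
    by (auto simp: unit_tris_def sbase_eq utri_eq)
  then show ?thesis
  proof cases
    case upright
    have "p \<in> zbase (l + m)" using upright zbase_mono[of m "l + m"] by auto
    then obtain c r where cr: "c \<in> zbase m" "r \<in> zbase l" "p = zscale l c + r"
      by (auto simp: zbase_add)
    have "zscale l b + z \<in> ztri p"
      using x upright by (simp add: block_pt_def inj_image_mem_iff[OF inj_plane])
    then obtain e where e: "e \<in> offsets" "zscale l b + z = p + e"
      by (auto simp: ztri_def)
    have "z - (r + e) = zscale l (c - b)"
      using e(2) cr(3) by (simp flip: zscale_diff add: algebra_simps)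
    moreover have "r + e \<in> zG l" using cr(2) e(1) by (auto simp: zG_def ztri_def)
    ultimately have "c - b = 0" using zinner_zscale_diff[OF z] by blast
    then have "c = b" by simp
    then have "z - e = r" using e(2) cr(3) by (simp add: algebra_simps)
    then have "e \<in> tri_offsets l z" and "T = block_pt l b ` ztri (z - e)"
      using e(1) cr \<open>c = b\<close> upright by (simp_all add: tri_offsets_def block_pt_def ztri_shift image_image)
    then show ?thesis by blast
  next
    case mirrored
    then obtain w where w: "w \<in> ztri p" "zscale l b + z = zmirror w"
      using x by (auto simp: block_pt_def mirror_plane inj_eq[OF inj_plane])
    have "0 \<le> fst w" "0 \<le> snd w"
      using w(1) zbase_bounds[OF mirrored(1)] by (auto simp: mem_ztri offsets_def zero_prod_def prod_eq_iff)
    moreover have "0 \<le> fst z" "0 \<le> snd z" "0 \<le> 2 ^ l * fst b" "0 \<le> 2 ^ l * snd b"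
      using zG_bounds[of z l] z zbase_bounds[OF b] by (auto simp: zinner_def)
    moreover have "2 ^ l * fst b + fst z = - fst w - snd w" "2 ^ l * snd b + snd z = snd w"
      using w(2) by (simp_all add: zscale_def zmirror_def prod_eq_iff)
    ultimately have "z = (0, 0)" by (simp add: prod_eq_iff)
    with z show ?thesis by (simp add: zinner_def zcorners_eq)
  qed
qed

lemma sadj_block_pt:
  assumes "b \<in> zbase n" "z \<in> zinner l"
  shows "{y. sadj (block_pt l b z) y} = block_pt l b ` znbrs l z"
proof (rule Set.set_eqI)
  fix y
  have "sadj (block_pt l b z) y
      \<longleftrightarrow> y \<noteq> block_pt l b z \<and> (\<exists>e\<in>tri_offsets l z. y \<in> block_pt l b ` ztri (z - e))"
    using unit_tri_of_block[OF assms(1)] unit_tri_through_block[OF assms] unfolding sadj_def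
    by metis
  also have "\<dots> \<longleftrightarrow> y \<in> block_pt l b ` znbrs l z"
    using inj_block_pt[of l b] unfolding znbrs_def by (auto simp: inj_eq)
  finally show "y \<in> {y. sadj (block_pt l b z) y} \<longleftrightarrow> y \<in> block_pt l b ` znbrs l z" by simp
qed

lemma neg_laplacian_block_pt:
  assumes b: "b \<in> zbase n" and z: "z \<in> zinner l"
  shows "neg_laplacian (block_pt l b ` zinner l) f (block_pt l b z) = zlap l (zrestrict l (f \<circ> block_pt l b)) z"
proof -
  have inj: "inj_on (block_pt l b) X" for X using inj_block_pt by (rule inj_on_subset) simp
  have "sdeg (block_pt l b z) = 4"
    unfolding sdeg_def sadj_block_pt[OF b z] card_image[OF inj] using card_znbrs[OF z] .
  moreover have "{y \<in> block_pt l b ` zinner l. sadj (block_pt l b z) y}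
      = block_pt l b ` zinner l \<inter> {y. sadj (block_pt l b z) y}"
    by blast
  then have "{y \<in> block_pt l b ` zinner l. sadj (block_pt l b z) y} = block_pt l b ` (znbrs l z \<inter> zinner l)"
    unfolding sadj_block_pt[OF b z] image_Int[OF inj_block_pt] by blast
  then have "(\<Sum>y\<in>{y \<in> block_pt l b ` zinner l. sadj (block_pt l b z) y}. f y)
      = (\<Sum>w\<in>znbrs l z. zrestrict l (f \<circ> block_pt l b) w)"
    by (simp add: sum.reindex[OF inj] sum.inter_restrict[OF finite_znbrs] zrestrict_def o_def)
  ultimately show ?thesis
    using z by (simp add: neg_laplacian_def zlap_def zrestrict_def)
qed

section \<open>Eigenvalues of the simple-boundary Laplacian\<close>

lemma mirror_mirror [simp]: "mirror (mirror x) = x"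
  by (simp add: mirror_def)

lemma inj_mirror: "inj mirror"
  by (metis injI mirror_mirror)

lemma mirror_image_mirror_image [simp]: "mirror ` mirror ` S = S"
  by (simp add: image_image)

lemma mem_mirror_image: "y \<in> mirror ` S \<longleftrightarrow> mirror y \<in> S"
  by (metis image_iff mirror_mirror)

lemma mirror_unit_tris: "T \<in> unit_tris \<Longrightarrow> mirror ` T \<in> unit_tris"
  unfolding unit_tris_def by auto

lemma sadj_mirror_imp: "sadj x y \<Longrightarrow> sadj (mirror x) (mirror y)"
  unfolding sadj_def using mirror_unit_tris inj_mirror by (metis imageI inj_eq)

lemma sadj_mirror: "sadj (mirror x) y \<longleftrightarrow> sadj x (mirror y)"
  using sadj_mirror_imp[of x "mirror y"] sadj_mirror_imp[of "mirror x" y] by auto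

lemma sdeg_mirror: "sdeg (mirror x) = sdeg x"
proof -
  have "{y. sadj (mirror x) y} = mirror ` {y. sadj x y}"
    by (auto simp: sadj_mirror mem_mirror_image)
  then show ?thesis
    unfolding sdeg_def by (simp add: card_image[OF inj_on_subset[OF inj_mirror]])
qed

lemma neg_laplacian_mirror:
  "neg_laplacian (mirror ` A) f (mirror x) = neg_laplacian A (f \<circ> mirror) x"
proof -
  have "{y \<in> mirror ` A. sadj (mirror x) y} = mirror ` {y \<in> A. sadj x y}"
    by (auto simp: sadj_mirror mem_mirror_image)
  then show ?thesis
    by (simp add: neg_laplacian_def sdeg_mirror sum.reindex[OF inj_on_subset[OF inj_mirror]])
qed

lemma is_eigenvalue_mirror_imp: "is_eigenvalue A ev \<Longrightarrow> is_eigenvalue (mirror ` A) ev"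
proof -
  assume "is_eigenvalue A ev"
  then obtain f where f: "\<exists>x\<in>A. f x \<noteq> 0" "\<forall>x\<in>A. neg_laplacian A f x = ev * f x"
    unfolding is_eigenvalue_def by blast
  have "neg_laplacian (mirror ` A) (f \<circ> mirror) x = ev * (f \<circ> mirror) x" if "x \<in> mirror ` A" for x
    using that f(2) by (auto simp: neg_laplacian_mirror o_def)
  moreover have "\<exists>x\<in>mirror ` A. (f \<circ> mirror) x \<noteq> 0"
    using f(1) by force
  ultimately show ?thesis
    unfolding is_eigenvalue_def by blast
qed

lemma is_eigenvalue_mirror: "is_eigenvalue (mirror ` A) ev \<longleftrightarrow> is_eigenvalue A ev"
  using is_eigenvalue_mirror_imp[of A] is_eigenvalue_mirror_imp[of "mirror ` A"] by auto

definition laplacian_mat :: "nat \<Rightarrow> (nat \<Rightarrow> pt) \<Rightarrow> real mat" where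
  "laplacian_mat n ix = mat n n (\<lambda>(i, j).
     (if i = j then real (sdeg (ix i)) else 0) - (if sadj (ix i) (ix j) then 1 else 0))"

lemma laplacian_mat_mult_vec:
  assumes ix: "bij_betw ix {0..<n} A" and i: "i < n"
  shows "(laplacian_mat n ix *\<^sub>v vec n (f \<circ> ix)) $ i = neg_laplacian A f (ix i)"
proof -
  have A: "finite A" "ix i \<in> A"
    using bij_betw_finite[OF ix] bij_betwE[OF ix] i by auto
  have "(laplacian_mat n ix *\<^sub>v vec n (f \<circ> ix)) $ i
      = (\<Sum>j = 0..<n. ((if ix j = ix i then real (sdeg (ix i)) else 0)
          - (if sadj (ix i) (ix j) then 1 else 0)) * f (ix j))"
  proof -
    have "i = j \<longleftrightarrow> ix j = ix i" if "j < n" for j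
      using ix i that unfolding bij_betw_def inj_on_def by auto
    then show ?thesis
      using i by (auto simp: laplacian_mat_def mult_mat_vec_def scalar_prod_def intro!: sum.cong)
  qed
  also have "\<dots> = (\<Sum>y\<in>A. ((if y = ix i then real (sdeg (ix i)) else 0)
      - (if sadj (ix i) y then 1 else 0)) * f y)"
    by (rule sum.reindex_bij_betw[OF ix])
  also have "\<dots> = (\<Sum>y\<in>A. if y = ix i then real (sdeg (ix i)) * f y else 0)
      - (\<Sum>y\<in>A. if sadj (ix i) y then f y else 0)"
    by (simp add: sum_subtractf[symmetric] left_diff_distrib, rule sum.cong) auto
  also have "\<dots> = neg_laplacian A f (ix i)"
    using A by (simp add: neg_laplacian_def sum.inter_filter)
  finally show ?thesis .
qed

text \<open>\<open>E0\<close> is a \<open>Min\<close>, which is only meaningful on a finite set of eigenvalues.\<close>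

lemma finite_eigenvalues:
  assumes "finite A"
  shows "finite {ev. is_eigenvalue A ev}"
proof -
  obtain ix where ix: "bij_betw ix {0..<card A} A"
    using ex_bij_betw_nat_finite[OF assms] by blast
  define M where "M = laplacian_mat (card A) ix"
  have M: "M \<in> carrier_mat (card A) (card A)" by (simp add: M_def laplacian_mat_def)
  have "eigenvalue M ev" if "is_eigenvalue A ev" for ev
  proof -
    from that obtain f where f: "\<exists>x\<in>A. f x \<noteq> 0" "\<forall>x\<in>A. neg_laplacian A f x = ev * f x"
      unfolding is_eigenvalue_def by blast
    define v where "v = vec (card A) (f \<circ> ix)"
    obtain x where x: "x \<in> A" "f x \<noteq> 0" using f(1) by blast
    then obtain j where "j < card A" "f (ix j) \<noteq> 0"
      using ix unfolding bij_betw_def by force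
    then have "v \<noteq> 0\<^sub>v (card A)"
      by (auto simp: v_def vec_eq_iff)
    moreover have "M *\<^sub>v v = ev \<cdot>\<^sub>v v"
      using f(2) ix M laplacian_mat_mult_vec[OF ix] bij_betwE[OF ix]
      by (intro eq_vecI) (auto simp: M_def v_def)
    moreover have "v \<in> carrier_vec (card A)" by (simp add: v_def)
    ultimately show ?thesis
      using M unfolding eigenvalue_def eigenvector_def by auto
  qed
  then have "{ev. is_eigenvalue A ev} \<subseteq> {ev. poly (char_poly M) ev = 0}"
    using eigenvalue_root_char_poly[OF M] by blast
  moreover have "char_poly M \<noteq> 0"
    using degree_monic_char_poly[OF M] by (metis coeff_0 zero_neq_one)
  ultimately show ?thesis
    using poly_roots_finite finite_subset by blast
qed

lemma neg_laplacian_scale: "neg_laplacian A (\<lambda>y. c * f y) x = c * neg_laplacian A f x"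
  by (simp add: neg_laplacian_def sum_distrib_left algebra_simps)

lemma neg_laplacian_touching:
  assumes "g x = k x" and "\<And>y. y \<in> A \<Longrightarrow> g y \<le> k y"
  shows "neg_laplacian A k x \<le> neg_laplacian A g x"
  using assms sum_mono[of "{y \<in> A. sadj x y}" g k] by (simp add: neg_laplacian_def)

text \<open>
  Comparison at a maximum \<open>x\<^sub>0\<close> of \<open>|f|/h\<close>: there the rescaled \<open>h\<close> touches \<open>\<plusminus>f\<close> from above.
\<close>

lemma positive_eigenfunction_least:
  assumes fin: "finite A" and h_pos: "\<And>x. x \<in> A \<Longrightarrow> 0 < h x"
    and h_eig: "\<And>x. x \<in> A \<Longrightarrow> neg_laplacian A h x = lam * h x"
    and "is_eigenvalue A ev"
  shows "lam \<le> ev"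
proof -
  obtain f where f_nz: "\<exists>x\<in>A. f x \<noteq> 0" and f_eig: "\<And>x. x \<in> A \<Longrightarrow> neg_laplacian A f x = ev * f x"
    using assms(4) unfolding is_eigenvalue_def by blast
  define r where "r x = \<bar>f x\<bar> / h x" for x
  obtain x1 where x1: "x1 \<in> A" "f x1 \<noteq> 0" using f_nz by blast
  have "Max (r ` A) \<in> r ` A" using fin x1 by (intro Max_in) auto
  then obtain x0 where x0: "x0 \<in> A" "r x0 = Max (r ` A)" by auto
  have r_max: "r y \<le> r x0" if "y \<in> A" for y
    using fin that by (simp add: x0(2))
  have "0 < r x1" using x1 h_pos[OF x1(1)] by (simp add: r_def)
  then have "0 < r x0" using r_max[OF x1(1)] by linarith
  then have f0: "f x0 \<noteq> 0" by (auto simp: r_def)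
  define g where "g x = sgn (f x0) * f x" for x
  have g0: "g x0 = r x0 * h x0"
    using h_pos[OF x0(1)] by (simp add: g_def r_def abs_sgn mult.commute)
  have g_le: "g y \<le> r x0 * h y" if "y \<in> A" for y
  proof -
    have "g y \<le> \<bar>g y\<bar>" by simp
    also have "\<bar>g y\<bar> = \<bar>f y\<bar>" using f0 by (simp add: g_def abs_mult)
    also have "\<bar>f y\<bar> \<le> r x0 * h y"
      using r_max[OF that] h_pos[OF that] by (simp add: r_def field_simps)
    finally show ?thesis .
  qed
  have "lam * g x0 = neg_laplacian A (\<lambda>y. r x0 * h y) x0"
    by (simp add: neg_laplacian_scale h_eig[OF x0(1)] g0)
  also have "\<dots> \<le> neg_laplacian A g x0"
    using g0 g_le by (rule neg_laplacian_touching)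
  also have "\<dots> = ev * g x0"
    unfolding g_def by (simp add: neg_laplacian_scale f_eig[OF x0(1)])
  finally show ?thesis
    using \<open>0 < r x0\<close> h_pos[OF x0(1)] g0 by simp
qed

lemma zinner_nonempty: "(1, 0) \<in> zinner (Suc k)"
proof -
  have "(0, 0) \<in> zbase (Suc k)"
    using zbase_mono[of 0 "Suc k"] by (auto simp: zero_prod_def)
  then have "(1, 0) \<in> zG (Suc k)"
    unfolding zG_def by (rule UN_I) (simp add: ztri_Pair)
  moreover have "(1::int, 0::int) \<notin> zcorners (Suc k)"
    by (auto simp: zcorners_eq) presburger
  ultimately show ?thesis by (simp add: zinner_def)
qed

lemma E0_block:
  assumes b: "b \<in> zbase n"
  shows "E0 (block_pt (Suc k) b ` zinner (Suc k)) = ground_ev k"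
proof -
  define B where "B = block_pt (Suc k) b ` zinner (Suc k)"
  define h where "h = ground_state k \<circ> inv_into UNIV (block_pt (Suc k) b)"
  have h_block: "h (block_pt (Suc k) b w) = ground_state k w" for w
    by (simp add: h_def inj_block_pt)
  have restrict: "zrestrict (Suc k) (h \<circ> block_pt (Suc k) b) = ground_state k"
    by (auto simp: zrestrict_def h_block ground_state_outside)
  have h_pos: "0 < h x" if "x \<in> B" for x
    using that ground_state[of k] by (auto simp: B_def h_block)
  have h_eig: "neg_laplacian B h x = ground_ev k * h x" if "x \<in> B" for x
    using that ground_state[of k] by (auto simp: B_def neg_laplacian_block_pt[OF b] restrict h_block)
  have fin: "finite B" by (simp add: B_def finite_zinner)
  have x1: "block_pt (Suc k) b (1, 0) \<in> B"
    using zinner_nonempty[of k] by (simp add: B_def)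
  have "is_eigenvalue B (ground_ev k)"
    unfolding is_eigenvalue_def using x1 h_pos[OF x1] h_eig by (intro exI[of _ h]) force
  then have "Min {ev. is_eigenvalue B ev} = ground_ev k"
    using positive_eigenfunction_least[OF fin h_pos h_eig] finite_eigenvalues[OF fin]
    by (intro Min_eqI) auto
  then show ?thesis by (simp add: E0_def B_def)
qed

lemma truncated_block_eq:
  "(\<lambda>x. 2 ^ l *\<^sub>R plane b + x) ` (Gn l - corners l) = block_pt l b ` zinner l"
proof -
  have "Gn l - corners l = plane ` zinner l"
    unfolding Gn_eq corners_eq zinner_def by (rule image_set_diff[OF inj_plane, symmetric])
  then show ?thesis
    by (simp add: image_image block_pt_def plane_add plane_zscale)
qed

theorem proposition5p4:
  fixes l :: nat and A :: "pt set"
  assumes "l \<ge> 1" and "truncated_triangle l A"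
  shows "10 / 5 ^ l \<le> E0 A \<and> E0 A \<le> 40 / 5 ^ l"
proof -
  obtain k where l: "l = Suc k" using assms(1) by (cases l) auto
  obtain b0 n where "b0 \<in> sbase n"
    and A0: "A = (\<lambda>x. 2 ^ l *\<^sub>R b0 + x) ` (Gn l - corners l)
      \<or> A = mirror ` (\<lambda>x. 2 ^ l *\<^sub>R b0 + x) ` (Gn l - corners l)"
    using assms(2) unfolding truncated_triangle_def by blast
  then obtain b where b: "b \<in> zbase n" and "b0 = plane b"
    by (auto simp: sbase_eq)
  with A0 have A: "A = block_pt l b ` zinner l \<or> A = mirror ` block_pt l b ` zinner l"
    by (simp only: truncated_block_eq)
  have "E0 A = ground_ev k"
    using A E0_block[OF b, of k] by (auto simp: l E0_def is_eigenvalue_mirror)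
  then show ?thesis
    using ground_ev_bounds[of k] by (simp add: l)
qed

end
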